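(* For all integers $m,r\ge 0$ and $n\ge 1$, and all real $x\neq 0$, $$H_{m+r,n}(x)=m!\,r!\,n\,n!\sum_{k=0}^{m}\sum_{\nu=0}^{k}\sum_{j=0}^{\nu}\alpha_{j,\nu}\,\frac{\Gamma(n+k-\nu)}{(k-\nu)!\,\nu!}\,\frac{(-x)^{\nu}}{x^{n+k}}\,\frac{H_{m-k,n}(x)}{(m-k)!\,n!}\,\frac{H_{r-\nu+j,\,n-j}(x)}{(r-\nu+j)!\,(n-j)!},$$ where any term with $r-\nu+j<0$ or $n-j<0$ is interpreted as $0$.
   Context: For integers $m,n\ge 0$, the two-index Hermite polynomial is $H_{m,n}(x)=\left(-\frac{d}{dx}+2x\right)^m(x^n)$, i.e. the operator $f\mapsto -f'+2xf$ applied $m$ times to $x^n$; by convention $H_{m,n}=0$ whenever $m<0$ or $n<0$. The numbers $\alpha_{j,\nu}$ ($0\le j\le \nu$) are defined by $\alpha_{0,\nu}=2^\nu$, $\alpha_{\nu,\nu}=1$, and $\alpha_{j,\nu}=2\alpha_{j,\nu-1}+\alpha_{j-1,\nu-1}$ for $1\le j<\nu$. $\Gamma$ is the Euler Gamma function. *)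

theory Defs
  imports "HOL-Analysis.Analysis" "HOL-Computational_Algebra.Polynomial"
begin

definition hop :: "real poly \<Rightarrow> real poly" where
  "hop p = - pderiv p + [:0, 2:] * p"

definition Hpoly :: "nat \<Rightarrow> nat \<Rightarrow> real poly" where
  "Hpoly m n = (hop ^^ m) (monom 1 n)"

definition H :: "nat \<Rightarrow> nat \<Rightarrow> real \<Rightarrow> real" where
  "H m n x = poly (Hpoly m n) x"

text \<open>alpha j nu for 0 \<le> j \<le> nu (values outside this range are irrelevant).\<close>
fun alpha :: "nat \<Rightarrow> nat \<Rightarrow> real" where
  "alpha 0 v = 2 ^ v"
| "alpha (Suc j) 0 = 0"
| "alpha (Suc j) (Suc v) =
     (if j = v then 1 else if v < j then 0 else 2 * alpha (Suc j) v + alpha j v)"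

end

theory Submission
  imports Defs
begin

(* Write A = -d/dx + 2x and D = d/dx. From D A = A D + 2 one gets
   D H_{r,n} = 2r H_{r-1,n} + n H_{r,n-1}, hence by a Pascal-triangle induction
   D^v H_{r,n} = sum_j C(v,j) 2^(v-j) [r]_(v-j) [n]_j H_{r-v+j,n-j} with falling factorials [a]_i.
   Commuting powers of x through A gives
   x^(n+m) A^m P = sum_k C(m,k) (-1)^k x^(m-k) H_{m-k,n} Q_k P,  Q_k = prod_(i<k) (x D - n - i),
   and Q_k = sum_v C(k,v) (-1)^(k-v) (n)_(k-v) x^v D^v with the rising factorial (n)_i.
   All three expansions are instances of one Pascal-type recurrence. Taking P = H_{r,n} and
   dividing by x^(n+m) gives the triple sum; its coefficients match the stated ones because
   alpha_{j,nu} = C(nu,j) 2^(nu-j) and (n)_(k-nu) = n Gamma(n+k-nu) / n!. *)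

lemma sum_Suc_choose_split:
  fixes G :: "nat \<Rightarrow> 'a::semiring_1"
  shows "(\<Sum>i\<le>Suc k. of_nat (Suc k choose i) * G i) =
         (\<Sum>i\<le>k. of_nat (k choose i) * G i) + (\<Sum>i\<le>k. of_nat (k choose i) * G (Suc i))"
proof -
  have split_Suc: "(\<Sum>i\<le>Suc k. of_nat (Suc k choose i) * G i) =
      G 0 + (\<Sum>i\<le>k. of_nat (k choose i) * G (Suc i)) + (\<Sum>i\<le>k. of_nat (k choose Suc i) * G (Suc i))"
    by (subst sum.atMost_Suc_shift) (simp add: sum.distrib algebra_simps)
  have "(\<Sum>i\<le>k. of_nat (k choose i) * G i) = (\<Sum>i\<le>Suc k. of_nat (k choose i) * G i)"
    by (simp add: binomial_eq_0)
  also have "\<dots> = G 0 + (\<Sum>i\<le>k. of_nat (k choose Suc i) * G (Suc i))"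
    by (subst sum.atMost_Suc_shift) simp
  finally show ?thesis
    unfolding split_Suc by (simp add: ac_simps)
qed

lemma additive_of_nat_mult:
  fixes f :: "'a::ring_1 \<Rightarrow> 'b::ring_1"
  assumes "Modules.additive f"
  shows "f (of_nat c * x) = of_nat c * f x"
  using additive.sum[OF assms, of "\<lambda>_. x" "{..<c}"] by simp

lemma binomial_recurrence:
  fixes F :: "nat \<Rightarrow> 'a::ring_1" and T :: "nat \<Rightarrow> 'a \<Rightarrow> 'a"
  assumes additive: "\<And>k. Modules.additive (T k)"
    and F_0: "F 0 = G 0 0"
    and F_Suc: "\<And>k. F (Suc k) = T k (F k)"
    and T_G: "\<And>k i. i \<le> k \<Longrightarrow> T k (G k i) = G (Suc k) i + G (Suc k) (Suc i)"
  shows "F k = (\<Sum>i\<le>k. of_nat (k choose i) * G k i)"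
proof (induction k)
  case 0
  show ?case by (simp add: F_0)
next
  case (Suc k)
  have "F (Suc k) = (\<Sum>i\<le>k. of_nat (k choose i) * T k (G k i))"
    by (simp add: F_Suc Suc additive.sum[OF additive] additive_of_nat_mult[OF additive])
  also have "\<dots> = (\<Sum>i\<le>k. of_nat (k choose i) * G (Suc k) i) + (\<Sum>i\<le>k. of_nat (k choose i) * G (Suc k) (Suc i))"
    by (simp add: T_G distrib_left sum.distrib)
  finally show ?case
    by (simp only: sum_Suc_choose_split)
qed

definition ffact :: "nat \<Rightarrow> 'a::comm_ring_1 \<Rightarrow> 'a" where
  "ffact i a = (\<Prod>l<i. a - of_nat l)"

lemma ffact_0 [simp]: "ffact 0 a = 1"
  by (simp add: ffact_def)

lemma ffact_Suc: "ffact (Suc i) a = ffact i a * (a - of_nat i)"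
  by (simp add: ffact_def)

lemma ffact_of_nat_eq_0: "a < i \<Longrightarrow> ffact i (of_nat a) = 0"
  unfolding ffact_def by (rule prod_zero) auto

lemma ffact_Suc_of_nat: "ffact (Suc i) (of_nat a) = ffact i (of_nat a) * of_nat (a - i)"
  by (cases "i \<le> a") (simp_all add: ffact_Suc of_nat_diff ffact_of_nat_eq_0)

lemma ffact_of_nat: "i \<le> a \<Longrightarrow> ffact i (of_nat a :: 'a::field_char_0) = fact a / fact (a - i)"
proof (induction i)
  case 0
  show ?case by simp
next
  case (Suc i)
  then have "fact (a - i) = of_nat (a - i) * (fact (a - Suc i) :: 'a)"
    by (simp add: fact_reduce)
  with Suc show ?case
    by (simp add: ffact_Suc_of_nat)
qed

lemma additive_pderiv: "Modules.additive (pderiv :: 'a::idom poly \<Rightarrow> _)"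
  by (simp add: Modules.additive_def pderiv_add)

lemma additive_hop: "Modules.additive hop"
  by (simp add: Modules.additive_def hop_def pderiv_add smult_add_right algebra_simps)

lemma hop_smult: "hop (smult c p) = smult c (hop p)"
  by (simp add: hop_def pderiv_smult smult_add_right smult_diff_right algebra_simps)

lemma pderiv_hop: "pderiv (hop p) = hop (pderiv p) + smult 2 p"
  by (simp add: hop_def pderiv_add pderiv_diff pderiv_minus pderiv_smult pderiv_pCons algebra_simps)

lemma Hpoly_0: "Hpoly 0 n = monom 1 n"
  by (simp add: Hpoly_def)

lemma Hpoly_Suc: "Hpoly (Suc m) n = hop (Hpoly m n)"
  by (simp add: Hpoly_def)

lemma Hpoly_add: "Hpoly (m + r) n = (hop ^^ m) (Hpoly r n)"
  by (simp add: Hpoly_def funpow_add)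

lemma pderiv_Hpoly:
  "pderiv (Hpoly r n) = smult (2 * real r) (Hpoly (r - 1) n) + smult (real n) (Hpoly r (n - 1))"
proof (induction r)
  case 0
  show ?case by (simp add: Hpoly_0 pderiv_monom smult_monom)
next
  case (Suc r)
  have "pderiv (Hpoly (Suc r) n) = hop (pderiv (Hpoly r n)) + smult 2 (Hpoly r n)"
    by (simp add: Hpoly_Suc pderiv_hop)
  also have "\<dots> = smult (2 * real r) (hop (Hpoly (r - 1) n)) + smult (real n) (Hpoly (Suc r) (n - 1))
      + smult 2 (Hpoly r n)"
    by (simp add: Suc additive.add[OF additive_hop] hop_smult Hpoly_Suc)
  also have "smult (2 * real r) (hop (Hpoly (r - 1) n)) = smult (2 * real r) (Hpoly r n)"
    by (cases r) (simp_all add: Hpoly_Suc)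
  finally show ?case
    by (simp add: algebra_simps smult_add_left)
qed

lemma higher_pderiv_Hpoly:
  "(pderiv ^^ v) (Hpoly r n) = (\<Sum>j\<le>v. of_nat (v choose j) *
      smult (2 ^ (v - j) * ffact (v - j) (real r) * ffact j (real n)) (Hpoly (r - (v - j)) (n - j)))"
proof (rule binomial_recurrence[where T = "\<lambda>_. pderiv"])
  fix v j :: nat
  assume "j \<le> v"
  then have "Suc v - j = Suc (v - j)" and "r - Suc (v - j) = r - (v - j) - 1"
    by auto
  then show "pderiv (smult (2 ^ (v - j) * ffact (v - j) (real r) * ffact j (real n)) (Hpoly (r - (v - j)) (n - j))) =
    smult (2 ^ (Suc v - j) * ffact (Suc v - j) (real r) * ffact j (real n)) (Hpoly (r - (Suc v - j)) (n - j)) +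
    smult (2 ^ (Suc v - Suc j) * ffact (Suc v - Suc j) (real r) * ffact (Suc j) (real n)) (Hpoly (r - (Suc v - Suc j)) (n - Suc j))"
    by (simp add: pderiv_smult pderiv_Hpoly ffact_Suc_of_nat smult_add_right algebra_simps)
qed (simp_all add: additive_pderiv)

definition X :: "'a::comm_semiring_1 poly" where
  "X = [:0, 1:]"

lemma pderiv_X [simp]: "pderiv X = 1"
  by (simp add: X_def pderiv_pCons)

lemma poly_X [simp]: "poly X x = x"
  by (simp add: X_def)

lemma X_eq_monom: "X = monom 1 1"
  by (simp add: X_def monom_Suc)

lemma X_power: "X ^ n = monom 1 n"
  unfolding X_eq_monom monom_power by simp

lemma X_mult_pderiv_X_power_mult:
  fixes p :: "'a::idom poly"
  shows "X * pderiv (X ^ v * p) = X ^ Suc v * pderiv p + smult (of_nat v) (X ^ v * p)"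
proof (cases v)
  case (Suc w)
  have "pderiv (X ^ v * p) = X ^ v * pderiv p + p * smult (of_nat v) (X ^ w)"
    unfolding Suc pderiv_mult pderiv_power_Suc by simp
  then show ?thesis
    unfolding Suc by (simp add: algebra_simps)
qed simp

(* (theta - c - k + 1) ... (theta - c) p for the Euler operator theta = X d/dX *)
fun euler_prod :: "'a::idom \<Rightarrow> nat \<Rightarrow> 'a poly \<Rightarrow> 'a poly" where
  "euler_prod c 0 p = p"
| "euler_prod c (Suc k) p = X * pderiv (euler_prod c k p) - smult (c + of_nat k) (euler_prod c k p)"

lemma euler_prod_expansion:
  "euler_prod c k p = (\<Sum>v\<le>k. of_nat (k choose v) *
      smult ((-1) ^ (k - v) * pochhammer c (k - v)) (X ^ v * (pderiv ^^ v) p))"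
proof (rule binomial_recurrence[where T = "\<lambda>k q. X * pderiv q - smult (c + of_nat k) q"])
  fix k v :: nat
  assume "v \<le> k"
  then have "Suc k - v = Suc (k - v)" and "of_nat (k - v) = (of_nat k - of_nat v :: 'a)"
    by (auto simp: of_nat_diff)
  then show "X * pderiv (smult ((-1) ^ (k - v) * pochhammer c (k - v)) (X ^ v * (pderiv ^^ v) p)) -
      smult (c + of_nat k) (smult ((-1) ^ (k - v) * pochhammer c (k - v)) (X ^ v * (pderiv ^^ v) p)) =
    smult ((-1) ^ (Suc k - v) * pochhammer c (Suc k - v)) (X ^ v * (pderiv ^^ v) p) +
    smult ((-1) ^ (Suc k - Suc v) * pochhammer c (Suc k - Suc v)) (X ^ Suc v * (pderiv ^^ Suc v) p)"
    by (intro poly_eqI) (simp add: pderiv_smult X_mult_pderiv_X_power_mult pochhammer_Suc algebra_simps)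
qed (simp_all add: Modules.additive_def pderiv_add smult_add_right algebra_simps)

(* x^(N+1) * hop (x^(-N) * p) *)
definition hop_conj :: "nat \<Rightarrow> real poly \<Rightarrow> real poly" where
  "hop_conj N p = smult (real N) p - X * pderiv p + smult 2 (X ^ 2 * p)"

lemma additive_hop_conj: "Modules.additive (hop_conj N)"
  by (simp add: Modules.additive_def hop_conj_def pderiv_add smult_add_right algebra_simps)

lemma hop_conj_smult: "hop_conj N (smult c p) = smult c (hop_conj N p)"
  by (simp add: hop_conj_def pderiv_smult smult_add_right smult_diff_right algebra_simps)

lemma hop_conj_mult:
  "hop_conj (a + N) (X ^ a * p * q) = X ^ Suc a * hop p * q - X ^ a * p * (X * pderiv q - smult (real N) q)"
  using X_mult_pderiv_X_power_mult[of a "p * q"]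
  by (simp add: hop_conj_def hop_def X_def pderiv_mult power2_eq_square algebra_simps
      smult_add_right smult_diff_right smult_add_left)

lemma hop_conj_X_power_mult: "hop_conj N (X ^ N * p) = X ^ Suc N * hop p"
  using hop_conj_mult[of N 0 p 1] by simp

lemma X_power_mult_hop_iterate:
  "X ^ (n + m) * (hop ^^ m) p = (\<Sum>k\<le>m. of_nat (m choose k) *
      smult ((-1) ^ k) (X ^ (m - k) * Hpoly (m - k) n * euler_prod (real n) k p))"
proof (rule binomial_recurrence[where T = "\<lambda>m. hop_conj (n + m)"])
  fix m k :: nat
  assume "k \<le> m"
  then have split: "n + m = (m - k) + (n + k)" and "Suc m - k = Suc (m - k)"
    by auto
  then show "hop_conj (n + m) (smult ((-1) ^ k) (X ^ (m - k) * Hpoly (m - k) n * euler_prod (real n) k p)) =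
    smult ((-1) ^ k) (X ^ (Suc m - k) * Hpoly (Suc m - k) n * euler_prod (real n) k p) +
    smult ((-1) ^ Suc k) (X ^ (Suc m - Suc k) * Hpoly (Suc m - Suc k) n * euler_prod (real n) (Suc k) p)"
    unfolding split hop_conj_smult hop_conj_mult by (simp add: Hpoly_Suc smult_diff_right)
qed (simp_all add: additive_hop_conj hop_conj_X_power_mult Hpoly_0 flip: X_power)

lemma alpha_eq_binomial: "alpha j v = of_nat (v choose j) * 2 ^ (v - j)"
proof (induction j v rule: alpha.induct)
  case (3 j v)
  consider "j = v" | "v < j" | "j < v"
    by linarith
  then show ?case
  proof cases
    case 3
    then have "(2::real) ^ (v - j) = 2 * 2 ^ (v - Suc j)"
      by (simp flip: power_Suc add: Suc_diff_Suc)
    with 3 "3.IH" show ?thesis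
      by (simp add: algebra_simps)
  qed (simp_all add: binomial_eq_0)
qed simp_all

lemma H_expansion:
  assumes "x \<noteq> 0"
  shows "H (m + r) n x = (\<Sum>k\<le>m. \<Sum>v\<le>k. \<Sum>j\<le>v.
     of_nat (m choose k) * of_nat (k choose v) * pochhammer (real n) (k - v) *
     (of_nat (v choose j) * 2 ^ (v - j) * ffact (v - j) (real r) * ffact j (real n)) *
     ((- x) ^ v / x ^ (n + k)) * H (m - k) n x * H (r + j - v) (n - j) x)"
proof -
  have "x ^ (n + m) * H (m + r) n x = poly (X ^ (n + m) * (hop ^^ m) (Hpoly r n)) x"
    by (simp add: H_def Hpoly_add poly_power)
  also have "\<dots> = (\<Sum>k\<le>m. \<Sum>v\<le>k. \<Sum>j\<le>v.
     of_nat (m choose k) * ((-1) ^ k * x ^ (m - k) * H (m - k) n x) *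
     (of_nat (k choose v) * ((-1) ^ (k - v) * pochhammer (real n) (k - v) * x ^ v)) *
     (of_nat (v choose j) * (2 ^ (v - j) * ffact (v - j) (real r) * ffact j (real n)) * H (r + j - v) (n - j) x))"
    (is "_ = ?S")
    by (simp add: X_power_mult_hop_iterate euler_prod_expansion higher_pderiv_Hpoly poly_sum poly_power
        H_def sum_distrib_left mult_ac)
  finally have "H (m + r) n x = ?S / x ^ (n + m)"
    using assms by (simp add: eq_divide_eq ac_simps)
  also have "\<dots> = (\<Sum>k\<le>m. \<Sum>v\<le>k. \<Sum>j\<le>v.
     of_nat (m choose k) * of_nat (k choose v) * pochhammer (real n) (k - v) *
     (of_nat (v choose j) * 2 ^ (v - j) * ffact (v - j) (real r) * ffact j (real n)) *
     ((- x) ^ v / x ^ (n + k)) * H (m - k) n x * H (r + j - v) (n - j) x)"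
    unfolding sum_divide_distrib
    by (intro sum.cong refl) (simp add: assms power_minus[of x] power_add power_diff[OF assms]
        neg_one_power_add_eq_neg_one_power_diff[symmetric] mult_ac)
  finally show ?thesis .
qed

lemma expansion_coefficient:
  assumes "n \<ge> 1" "j \<le> v" "v \<le> k" "k \<le> m"
  shows "of_nat (m choose k) * of_nat (k choose v) * pochhammer (real n) (k - v) *
      (of_nat (v choose j) * 2 ^ (v - j) * ffact (v - j) (real r) * ffact j (real n)) =
    fact m * fact r * real n * fact n *
      (if v \<le> r + j \<and> j \<le> n then
         alpha j v * (Gamma (real (n + k - v)) / (fact (k - v) * fact v))
           / (fact (m - k) * fact n) / (fact (r + j - v) * fact (n - j))
       else 0)"
proof (cases "v \<le> r + j \<and> j \<le> n")
  case False
  then show ?thesis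
    by (auto simp: ffact_of_nat_eq_0)
next
  case True
  have "pochhammer (real n) (k - v) = Gamma (real n + real (k - v)) / Gamma (real n)"
    using assms by (intro pochhammer_Gamma) (auto simp: of_nat_in_nonpos_Ints_iff)
  also have "\<dots> = real n * Gamma (real (n + k - v)) / fact n"
    using assms Gamma_fact[of "n - 1", where 'a = real] by (simp add: fact_reduce add_diff_eq)
  finally have pochhammer_eq: "pochhammer (real n) (k - v) = real n * Gamma (real (n + k - v)) / fact n" .
  have "v - j \<le> r" and "r - (v - j) = r + j - v"
    using True assms by auto
  then have ffact_r: "ffact (v - j) (real r) = fact r / fact (r + j - v)"
    using ffact_of_nat[of "v - j" r] by simp
  have ffact_n: "ffact j (real n) = fact n / fact (n - j)"
    using True ffact_of_nat[of j n] by simp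
  show ?thesis
    unfolding pochhammer_eq ffact_r ffact_n alpha_eq_binomial
    using True assms by (simp add: binomial_fact field_simps)
qed

theorem mainTheorem17:
  fixes m r n :: nat and x :: real
  assumes "n \<ge> 1" and "x \<noteq> 0"
  shows "H (m + r) n x =
    fact m * fact r * real n * fact n *
    (\<Sum>k = 0..m. \<Sum>\<nu> = 0..k. \<Sum>j = 0..\<nu>.
       (if \<nu> \<le> r + j \<and> j \<le> n then
          alpha j \<nu> * (Gamma (real (n + k - \<nu>)) / (fact (k - \<nu>) * fact \<nu>))
          * ((- x) ^ \<nu> / x ^ (n + k))
          * (H (m - k) n x / (fact (m - k) * fact n))
          * (H (r + j - \<nu>) (n - j) x / (fact (r + j - \<nu>) * fact (n - j)))
        else 0))"
  unfolding H_expansion[OF assms(2)] atLeast0AtMost sum_distrib_left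
  by (intro sum.cong refl, subst expansion_coefficient) (use assms(1) in \<open>auto simp: mult_ac\<close>)

end
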